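(* Let $R$ be a commutative ring, $S$ a subring of $R$, $I$ an ideal of $S$, $n\ge1$, $f\in(T_n(R))[x]$ and $1\le i\le j\le n$. [Right] The following are equivalent: (1) $[f(C)]_{ij}\in I$ for all $C\in T_n(S)$; (2) $[f_{ih}(C)]_{hj}\in I$ for all $C\in T_n(S)$ and all $h$ with $i\le h\le j$; (3) $\langle f_{ih},p_{hj}\rangle\in\mathrm{Int}(S^{\ast},I)$ for all $h$ with $i\le h\le j$. [Left] The following are equivalent: (1) $[f(C)_\ell]_{ij}\in I$ for all $C\in T_n(S)$; (2) $[f_{hj}(C)]_{ih}\in I$ for all $C\in T_n(S)$ and all $h$ with $i\le h\le j$; (3) $\langle f_{hj},p_{ih}\rangle\in\mathrm{Int}(S^{\ast},I)$ for all $h$ with $i\le h\le j$.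
   Context: $\mathbb{N}=\{1,2,3,\dots\}$. $T_n(A)$ denotes the ring of upper triangular $n\times n$ matrices over a ring $A$, and $[M]_{ij}$ the $(i,j)$-entry of a matrix $M$. For $f=\sum_k F_kx^k\in(T_n(R))[x]$ with $F_k\in T_n(R)$, right substitution is $f(C)=\sum_kF_kC^k$ and left substitution is $f(C)_\ell=\sum_kC^kF_k$. Writing $f_{ij}^{(k)}=[F_k]_{ij}$, set $f_{ij}=\sum_k f_{ij}^{(k)}x^k\in R[x]$. For $g\in R[x]$, $g(C)$ is the usual evaluation at a matrix. Let $R[X]=R[\{x_{ab}\mid a,b\in\mathbb{N}\}]$. Path polynomials: for $1\le i\le j$ and $k>0$, $p_{ij}^{(k)}=\sum_{i=i_1\le i_2\le\dots\le i_{k+1}=j} x_{i_1i_2}\cdots x_{i_ki_{k+1}}$; for $1\le i\le j$, $p_{ij}^{(0)}=\delta_{ij}$; for $i>j$, $p_{ij}^{(k)}=0$. For $g=\sum_kg_kx^k\in R[x]$, $\langle g,p_{ij}\rangle=\sum_k g_kp_{ij}^{(k)}\in R[X]$. $\mathrm{Int}(S^{\ast},I)$ denotes the set of polynomials in $R[X]$ that take values in $I$ whenever elements of $S$ are substituted (independently) for all the variables. *)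

theory Defs
  imports "HOL-Computational_Algebra.Polynomial" "HOL-Library.Poly_Mapping"
begin

text \<open>An n x n matrix over a ring is represented as a function nat => nat => 'a;
  only the entries with indices in 1..n are meaningful.\<close>

type_synonym 'a sqmat = "nat \<Rightarrow> nat \<Rightarrow> 'a"

definition tri_mats :: "nat \<Rightarrow> 'a::zero set \<Rightarrow> 'a sqmat set" where
  "tri_mats n A = {C. \<forall>i j. if 1 \<le> i \<and> i \<le> j \<and> j \<le> n then C i j \<in> A else C i j = 0}"

definition mat_mult :: "nat \<Rightarrow> 'a::comm_ring_1 sqmat \<Rightarrow> 'a sqmat \<Rightarrow> 'a sqmat" where
  "mat_mult n A B = (\<lambda>i j. \<Sum>h=1..n. A i h * B h j)"

definition mat_one :: "nat \<Rightarrow> 'a::comm_ring_1 sqmat" where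
  "mat_one n = (\<lambda>i j. if i = j \<and> 1 \<le> i \<and> i \<le> n then 1 else 0)"

definition mat_pow :: "nat \<Rightarrow> 'a::comm_ring_1 sqmat \<Rightarrow> nat \<Rightarrow> 'a sqmat" where
  "mat_pow n C k = (mat_mult n C ^^ k) (mat_one n)"

text \<open>f = sum_k F_k x^k in (T_n(R))[x] is represented by its coefficient list
  Fs = [F_0, F_1, ..., F_d].\<close>

definition right_subst :: "nat \<Rightarrow> 'a::comm_ring_1 sqmat list \<Rightarrow> 'a sqmat \<Rightarrow> 'a sqmat" where
  "right_subst n Fs C = (\<lambda>i j. \<Sum>k<length Fs. mat_mult n (Fs ! k) (mat_pow n C k) i j)"

definition left_subst :: "nat \<Rightarrow> 'a::comm_ring_1 sqmat list \<Rightarrow> 'a sqmat \<Rightarrow> 'a sqmat" where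
  "left_subst n Fs C = (\<lambda>i j. \<Sum>k<length Fs. mat_mult n (mat_pow n C k) (Fs ! k) i j)"

definition entry_poly :: "'a::zero sqmat list \<Rightarrow> nat \<Rightarrow> nat \<Rightarrow> 'a poly" where
  "entry_poly Fs i j = Poly (map (\<lambda>M. M i j) Fs)"

definition poly_mat_eval :: "nat \<Rightarrow> 'a::comm_ring_1 poly \<Rightarrow> 'a sqmat \<Rightarrow> 'a sqmat" where
  "poly_mat_eval n g C = (\<lambda>i j. \<Sum>k\<le>degree g. coeff g k * mat_pow n C k i j)"

type_synonym 'a mpolyX = "((nat \<times> nat) \<Rightarrow>\<^sub>0 nat) \<Rightarrow>\<^sub>0 'a"

definition mvar :: "nat \<Rightarrow> nat \<Rightarrow> 'a::comm_ring_1 mpolyX" where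
  "mvar a b = Poly_Mapping.single (Poly_Mapping.single (a, b) 1) 1"

definition mconst :: "'a::comm_ring_1 \<Rightarrow> 'a mpolyX" where
  "mconst c = Poly_Mapping.single 0 c"

definition meval :: "(nat \<times> nat \<Rightarrow> 'a::comm_ring_1) \<Rightarrow> 'a mpolyX \<Rightarrow> 'a" where
  "meval \<sigma> P = (\<Sum>m\<in>Poly_Mapping.keys P.
      Poly_Mapping.lookup P m * (\<Prod>v\<in>Poly_Mapping.keys m. \<sigma> v ^ Poly_Mapping.lookup m v))"

text \<open>Path polynomials p_ij^(k): sum over sequences i = i_1 <= ... <= i_(k+1) = j
  (represented as sorted lists of length k+1) of x_(i_1 i_2) ... x_(i_k i_(k+1)).
  For k = 0 this gives delta_ij, and for i > j it gives 0.\<close>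
definition path_seqs :: "nat \<Rightarrow> nat \<Rightarrow> nat \<Rightarrow> nat list set" where
  "path_seqs k i j = {s. length s = Suc k \<and> sorted s \<and> s ! 0 = i \<and> s ! k = j}"

definition path_poly :: "nat \<Rightarrow> nat \<Rightarrow> nat \<Rightarrow> 'a::comm_ring_1 mpolyX" where
  "path_poly k i j = (\<Sum>s\<in>path_seqs k i j. \<Prod>t<k. mvar (s ! t) (s ! Suc t))"

definition pairing :: "'a::comm_ring_1 poly \<Rightarrow> nat \<Rightarrow> nat \<Rightarrow> 'a mpolyX" where
  "pairing g i j = (\<Sum>k\<le>degree g. mconst (coeff g k) * path_poly k i j)"

definition Int_SI :: "'a::comm_ring_1 set \<Rightarrow> 'a set \<Rightarrow> 'a mpolyX set" where
  "Int_SI S I = {P. \<forall>\<sigma>. (\<forall>v. \<sigma> v \<in> S) \<longrightarrow> meval \<sigma> P \<in> I}"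

definition is_subring :: "'a::comm_ring_1 set \<Rightarrow> bool" where
  "is_subring S \<longleftrightarrow> 0 \<in> S \<and> 1 \<in> S \<and> (\<forall>a\<in>S. \<forall>b\<in>S. a + b \<in> S \<and> a - b \<in> S \<and> a * b \<in> S)"

definition is_ideal_of :: "'a::comm_ring_1 set \<Rightarrow> 'a set \<Rightarrow> bool" where
  "is_ideal_of I S \<longleftrightarrow> I \<subseteq> S \<and> 0 \<in> I \<and>
     (\<forall>a\<in>I. \<forall>b\<in>I. a + b \<in> I \<and> a - b \<in> I) \<and> (\<forall>s\<in>S. \<forall>a\<in>I. s * a \<in> I)"

end

theory Submission
  imports Defs
begin

text \<open>For upper triangular C the entry [C^k]_ab is the sum, over nondecreasing index
  sequences a = i_1 \<le> ... \<le> i_(k+1) = b, of the products of the entries C_(i_t i_(t+1)); this is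
  exactly the path polynomial p_ab^(k) evaluated at the entries of C. Hence [g(C)]_ab is
  the value of the pairing of g with p_ab, which gives (2) \<longleftrightarrow> (3). For (1) \<longleftrightarrow> (2),
  [f(C)]_ij = \<Sum>_(i\<le>h\<le>j) [f_ih(C)]_hj; replacing C by the matrix that keeps only its rows
  x, ..., n turns this into the partial sum over x \<le> h \<le> j, so every partial sum
  lies in I, and the individual terms are differences of consecutive partial sums.
  Left substitution is symmetric, with columns 1, ..., x kept instead.\<close>

definition upper_triangular :: "'a::zero sqmat \<Rightarrow> bool" where
  "upper_triangular C \<longleftrightarrow> (\<forall>a b. b < a \<longrightarrow> C a b = 0)"

definition rows_from :: "nat \<Rightarrow> 'a::zero sqmat \<Rightarrow> 'a sqmat" where
  "rows_from x C = (\<lambda>a b. if x \<le> a then C a b else 0)"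

definition cols_upto :: "nat \<Rightarrow> 'a::zero sqmat \<Rightarrow> 'a sqmat" where
  "cols_upto x C = (\<lambda>a b. if b \<le> x then C a b else 0)"

lemma upper_triangular_rows_from: "upper_triangular C \<Longrightarrow> upper_triangular (rows_from x C)"
  by (simp add: upper_triangular_def rows_from_def)

lemma upper_triangular_cols_upto: "upper_triangular C \<Longrightarrow> upper_triangular (cols_upto x C)"
  by (simp add: upper_triangular_def cols_upto_def)

lemma tri_mats_upper_triangular: "C \<in> tri_mats n A \<Longrightarrow> upper_triangular C"
  unfolding tri_mats_def upper_triangular_def by (metis (mono_tags, lifting) leD mem_Collect_eq)

lemma tri_mats_entry: "C \<in> tri_mats n A \<Longrightarrow> 0 \<in> A \<Longrightarrow> C a b \<in> A"
  unfolding tri_mats_def by (metis (mono_tags, lifting) mem_Collect_eq)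

lemma rows_from_tri_mats: "C \<in> tri_mats n A \<Longrightarrow> 0 \<in> A \<Longrightarrow> rows_from x C \<in> tri_mats n A"
  unfolding tri_mats_def rows_from_def by auto

lemma cols_upto_tri_mats: "C \<in> tri_mats n A \<Longrightarrow> 0 \<in> A \<Longrightarrow> cols_upto x C \<in> tri_mats n A"
  unfolding tri_mats_def cols_upto_def by auto

definition path_sum :: "nat \<Rightarrow> nat \<Rightarrow> nat \<Rightarrow> (nat \<Rightarrow> nat \<Rightarrow> 'a::comm_ring_1) \<Rightarrow> 'a" where
  "path_sum k a b w = (\<Sum>s\<in>path_seqs k a b. \<Prod>t<k. w (s ! t) (s ! Suc t))"

lemma path_seqs_0: "path_seqs 0 a b = (if a = b then {[a]} else {})"
  unfolding path_seqs_def by (auto simp: length_Suc_conv)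

lemma path_seqs_Suc: "path_seqs (Suc k) a b = (\<Union>c\<in>{a..b}. (Cons a) ` path_seqs k c b)"
proof (intro equalityI subsetI)
  fix s assume s: "s \<in> path_seqs (Suc k) a b"
  then obtain s' where s': "s = a # s'" "length s' = Suc k" "sorted (a # s')" "s' ! k = b"
    unfolding path_seqs_def by (auto simp: length_Suc_conv)
  then have sorted_s': "sorted s'" "\<forall>y\<in>set s'. a \<le> y"
    by simp_all
  have "a \<le> s' ! 0"
    using sorted_s'(2) nth_mem[of 0 s'] s'(2) by simp
  moreover have "s' ! 0 \<le> b"
    using sorted_nth_mono[OF sorted_s'(1), of 0 k] s'(2,4) by simp
  moreover have "s' \<in> path_seqs k (s' ! 0) b"
    using s' sorted_s' unfolding path_seqs_def by simp
  ultimately show "s \<in> (\<Union>c\<in>{a..b}. (Cons a) ` path_seqs k c b)"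
    using s'(1) by auto
next
  fix s assume "s \<in> (\<Union>c\<in>{a..b}. (Cons a) ` path_seqs k c b)"
  then obtain c s' where c: "a \<le> c" and s': "s' \<in> path_seqs k c b" and s: "s = a # s'"
    by auto
  have "\<forall>y\<in>set s'. c \<le> y"
  proof
    fix y assume "y \<in> set s'"
    then obtain t where "t < length s'" "y = s' ! t"
      by (auto simp: in_set_conv_nth)
    then show "c \<le> y"
      using s' sorted_nth_mono[of s' 0 t] unfolding path_seqs_def by auto
  qed
  then show "s \<in> path_seqs (Suc k) a b"
    using s' s c unfolding path_seqs_def by auto
qed

lemma finite_path_seqs: "finite (path_seqs k a b)"
  by (induction k arbitrary: a) (auto simp: path_seqs_0 path_seqs_Suc)

lemma path_sum_0: "path_sum 0 a b w = (if a = b then 1 else 0)"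
  by (simp add: path_sum_def path_seqs_0)

lemma path_sum_Suc: "path_sum (Suc k) a b w = (\<Sum>c=a..b. w a c * path_sum k c b w)"
proof -
  let ?P = "\<lambda>k s. \<Prod>t<k. w (s ! t) (s ! Suc t)"
  have disjoint: "\<forall>c\<in>{a..b}. \<forall>d\<in>{a..b}. c \<noteq> d \<longrightarrow> Cons a ` path_seqs k c b \<inter> Cons a ` path_seqs k d b = {}"
    unfolding path_seqs_def by auto
  have "path_sum (Suc k) a b w = (\<Sum>c=a..b. \<Sum>s\<in>Cons a ` path_seqs k c b. ?P (Suc k) s)"
    unfolding path_sum_def path_seqs_Suc
    by (rule sum.UNION_disjoint) (use disjoint in \<open>auto simp: finite_path_seqs\<close>)
  also have "\<dots> = (\<Sum>c=a..b. \<Sum>s\<in>path_seqs k c b. ?P (Suc k) (a # s))"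
    by (simp add: sum.reindex)
  also have "\<dots> = (\<Sum>c=a..b. \<Sum>s\<in>path_seqs k c b. w a c * ?P k s)"
    by (intro sum.cong refl) (simp add: prod.lessThan_Suc_shift path_seqs_def del: prod.lessThan_Suc)
  finally show ?thesis
    by (simp add: path_sum_def sum_distrib_left)
qed

lemma path_sum_below_diagonal: "b < a \<Longrightarrow> path_sum k a b w = 0"
  by (induction k arbitrary: a) (simp_all add: path_sum_0 path_sum_Suc)

lemma path_sum_cong:
  assumes "\<And>p q. a \<le> p \<Longrightarrow> p \<le> q \<Longrightarrow> q \<le> b \<Longrightarrow> w p q = w' p q"
  shows "path_sum k a b w = path_sum k a b w'"
  using assms by (induction k arbitrary: a) (simp_all add: path_sum_0 path_sum_Suc)

lemma path_sum_rows_from: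
  "x \<le> b \<Longrightarrow> path_sum k a b (rows_from x w) = (if x \<le> a then path_sum k a b w else 0)"
  by (induction k arbitrary: a) (auto simp: path_sum_0 path_sum_Suc rows_from_def)

lemma path_sum_cols_upto:
  "a \<le> x \<Longrightarrow> path_sum k a b (cols_upto x w) = (if b \<le> x then path_sum k a b w else 0)"
  by (induction k arbitrary: a) (auto simp: path_sum_0 path_sum_Suc cols_upto_def intro!: sum.neutral)

lemma mat_pow_Suc: "mat_pow n C (Suc k) a b = (\<Sum>c=1..n. C a c * mat_pow n C k c b)"
  by (simp add: mat_pow_def mat_mult_def)

lemma mat_pow_eq_path_sum:
  assumes C: "upper_triangular C" and "1 \<le> a" "b \<le> n"
  shows "mat_pow n C k a b = path_sum k a b C"
  using assms(2)
proof (induction k arbitrary: a)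
  case 0
  then show ?case using assms(3) by (simp add: mat_pow_def mat_one_def path_sum_0)
next
  case (Suc k)
  have "mat_pow n C (Suc k) a b = (\<Sum>c=1..n. C a c * path_sum k c b C)"
    using Suc.IH by (simp add: mat_pow_Suc)
  also have "\<dots> = (\<Sum>c=a..b. C a c * path_sum k c b C)"
    using C Suc.prems assms(3)
    by (intro sum.mono_neutral_right) (auto simp: upper_triangular_def path_sum_below_diagonal)
  finally show ?case by (simp add: path_sum_Suc)
qed

lemma poly_mat_eval_eq_path_sum:
  assumes "upper_triangular C" "1 \<le> a" "b \<le> n"
  shows "poly_mat_eval n g C a b = (\<Sum>k\<le>degree g. coeff g k * path_sum k a b C)"
  by (simp add: poly_mat_eval_def mat_pow_eq_path_sum[OF assms])

lemma poly_mat_eval_rows_from: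
  assumes "upper_triangular C" "1 \<le> a" "b \<le> n" "x \<le> b"
  shows "poly_mat_eval n g (rows_from x C) a b = (if x \<le> a then poly_mat_eval n g C a b else 0)"
  using assms
  by (simp add: poly_mat_eval_eq_path_sum upper_triangular_rows_from path_sum_rows_from)

lemma poly_mat_eval_cols_upto:
  assumes "upper_triangular C" "1 \<le> a" "b \<le> n" "a \<le> x"
  shows "poly_mat_eval n g (cols_upto x C) a b = (if b \<le> x then poly_mat_eval n g C a b else 0)"
  using assms
  by (simp add: poly_mat_eval_eq_path_sum upper_triangular_cols_upto path_sum_cols_upto)

definition eval_monom :: "(nat \<times> nat \<Rightarrow> 'a::comm_ring_1) \<Rightarrow> (nat \<times> nat \<Rightarrow>\<^sub>0 nat) \<Rightarrow> 'a" where
  "eval_monom \<sigma> m = (\<Prod>v\<in>Poly_Mapping.keys m. \<sigma> v ^ Poly_Mapping.lookup m v)"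

lemma eval_monom_superset:
  assumes "finite A" "Poly_Mapping.keys m \<subseteq> A"
  shows "eval_monom \<sigma> m = (\<Prod>v\<in>A. \<sigma> v ^ Poly_Mapping.lookup m v)"
  unfolding eval_monom_def
  by (rule prod.mono_neutral_left) (use assms in \<open>auto simp: not_in_keys_iff_lookup_eq_zero\<close>)

lemma eval_monom_add: "eval_monom \<sigma> (m1 + m2) = eval_monom \<sigma> m1 * eval_monom \<sigma> m2"
proof -
  let ?A = "Poly_Mapping.keys m1 \<union> Poly_Mapping.keys m2"
  have "eval_monom \<sigma> (m1 + m2) = (\<Prod>v\<in>?A. \<sigma> v ^ Poly_Mapping.lookup (m1 + m2) v)"
    by (rule eval_monom_superset) (auto dest: keys_add[THEN subsetD])
  also have "\<dots> = (\<Prod>v\<in>?A. \<sigma> v ^ Poly_Mapping.lookup m1 v) * (\<Prod>v\<in>?A. \<sigma> v ^ Poly_Mapping.lookup m2 v)"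
    by (simp add: lookup_add power_add prod.distrib)
  finally show ?thesis
    by (simp add: eval_monom_superset[symmetric])
qed

lemma eval_monom_single: "eval_monom \<sigma> (Poly_Mapping.single v 1) = \<sigma> v"
  by (simp add: eval_monom_def)

lemma eval_monom_sum_single:
  "eval_monom \<sigma> (\<Sum>t<k. Poly_Mapping.single (v t) 1) = (\<Prod>t<(k::nat). \<sigma> (v t))"
  by (induction k) (simp_all add: eval_monom_add eval_monom_single[simplified], simp add: eval_monom_def)

lemma meval_superset:
  assumes "finite A" "Poly_Mapping.keys P \<subseteq> A"
  shows "meval \<sigma> P = (\<Sum>m\<in>A. Poly_Mapping.lookup P m * eval_monom \<sigma> m)"
  unfolding meval_def eval_monom_def[symmetric]
  by (rule sum.mono_neutral_left) (use assms in \<open>auto simp: not_in_keys_iff_lookup_eq_zero\<close>)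

lemma meval_add: "meval \<sigma> (P + Q) = meval \<sigma> P + meval \<sigma> Q"
proof -
  let ?A = "Poly_Mapping.keys P \<union> Poly_Mapping.keys Q"
  have "meval \<sigma> (P + Q) = (\<Sum>m\<in>?A. Poly_Mapping.lookup (P + Q) m * eval_monom \<sigma> m)"
    by (rule meval_superset) (auto dest: keys_add[THEN subsetD])
  also have "\<dots> = (\<Sum>m\<in>?A. Poly_Mapping.lookup P m * eval_monom \<sigma> m)
                 + (\<Sum>m\<in>?A. Poly_Mapping.lookup Q m * eval_monom \<sigma> m)"
    by (simp add: lookup_add distrib_right sum.distrib)
  finally show ?thesis
    by (simp add: meval_superset[symmetric])
qed

lemma meval_zero: "meval \<sigma> 0 = 0"
  by (simp add: meval_def)

lemma meval_sum: "meval \<sigma> (\<Sum>x\<in>A. P x) = (\<Sum>x\<in>A. meval \<sigma> (P x))"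
  by (induction A rule: infinite_finite_induct) (simp_all add: meval_add meval_zero)

lemma meval_single: "meval \<sigma> (Poly_Mapping.single m c) = c * eval_monom \<sigma> m"
  by (subst meval_superset[of "{m}"]) auto

lemma prod_mvar:
  "(\<Prod>t<(k::nat). mvar (a t) (b t)) = Poly_Mapping.single (\<Sum>t<k. Poly_Mapping.single (a t, b t) 1) (1::'a::comm_ring_1)"
  by (induction k) (simp_all add: mvar_def mult_single)

lemma meval_pairing:
  "meval \<sigma> (pairing g a b) = (\<Sum>k\<le>degree g. coeff g k * path_sum k a b (\<lambda>p q. \<sigma> (p, q)))"
  by (simp add: pairing_def path_poly_def path_sum_def prod_mvar mconst_def sum_distrib_left
      mult_single meval_sum meval_single eval_monom_sum_single[simplified])

lemma poly_mat_eval_in_iff_pairing_in_Int_SI: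
  assumes "0 \<in> S" "1 \<le> a" "b \<le> n"
  shows "(\<forall>C\<in>tri_mats n S. poly_mat_eval n g C a b \<in> I) \<longleftrightarrow> pairing g a b \<in> Int_SI S I"
proof
  assume H: "\<forall>C\<in>tri_mats n S. poly_mat_eval n g C a b \<in> I"
  show "pairing g a b \<in> Int_SI S I"
    unfolding Int_SI_def
  proof (intro CollectI allI impI)
    fix \<sigma> :: "nat \<times> nat \<Rightarrow> 'a" assume \<sigma>: "\<forall>v. \<sigma> v \<in> S"
    define C where "C = (\<lambda>p q. if 1 \<le> p \<and> p \<le> q \<and> q \<le> n then \<sigma> (p, q) else 0)"
    have C: "C \<in> tri_mats n S"
      using \<sigma> unfolding C_def tri_mats_def by auto
    have "path_sum k a b (\<lambda>p q. \<sigma> (p, q)) = path_sum k a b C" for k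
      using assms(2,3) by (intro path_sum_cong) (simp add: C_def)
    then have "meval \<sigma> (pairing g a b) = poly_mat_eval n g C a b"
      using assms(2,3) by (simp add: meval_pairing poly_mat_eval_eq_path_sum tri_mats_upper_triangular[OF C])
    then show "meval \<sigma> (pairing g a b) \<in> I"
      using H C by simp
  qed
next
  assume H: "pairing g a b \<in> Int_SI S I"
  show "\<forall>C\<in>tri_mats n S. poly_mat_eval n g C a b \<in> I"
  proof
    fix C assume C: "C \<in> tri_mats n S"
    have "meval (\<lambda>(p, q). C p q) (pairing g a b) \<in> I"
      using H tri_mats_entry[OF C assms(1)] unfolding Int_SI_def by auto
    then show "poly_mat_eval n g C a b \<in> I"
      using assms(2,3) by (simp add: meval_pairing poly_mat_eval_eq_path_sum tri_mats_upper_triangular[OF C])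
  qed
qed

lemma poly_mat_eval_entry_poly:
  "poly_mat_eval n (entry_poly Fs a b) C x y = (\<Sum>k<length Fs. (Fs ! k) a b * mat_pow n C k x y)"
proof -
  let ?g = "entry_poly Fs a b"
  have coeff: "coeff ?g k = (if k < length Fs then (Fs ! k) a b else 0)" for k
    by (simp add: entry_poly_def nth_default_def)
  have "poly_mat_eval n ?g C x y = (\<Sum>k<max (length Fs) (Suc (degree ?g)). coeff ?g k * mat_pow n C k x y)"
    unfolding poly_mat_eval_def by (rule sum.mono_neutral_left) (auto simp: coeff_eq_0)
  also have "\<dots> = (\<Sum>k<length Fs. coeff ?g k * mat_pow n C k x y)"
    by (rule sum.mono_neutral_right) (auto simp: coeff)
  finally show ?thesis
    by (simp add: coeff)
qed

lemma mat_pow_below_diagonal: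
  "upper_triangular C \<Longrightarrow> 1 \<le> a \<Longrightarrow> b \<le> n \<Longrightarrow> b < a \<Longrightarrow> mat_pow n C k a b = 0"
  by (simp add: mat_pow_eq_path_sum path_sum_below_diagonal)

lemma right_subst_eq_sum_entry_polys:
  assumes Fs: "\<forall>k<length Fs. upper_triangular (Fs ! k)" and C: "upper_triangular C"
    and "1 \<le> i" "j \<le> n"
  shows "right_subst n Fs C i j = (\<Sum>h=i..j. poly_mat_eval n (entry_poly Fs i h) C h j)"
proof -
  have "right_subst n Fs C i j = (\<Sum>h=1..n. \<Sum>k<length Fs. (Fs ! k) i h * mat_pow n C k h j)"
    by (simp add: right_subst_def mat_mult_def sum.swap[of _ "{..<length Fs}"])
  also have "\<dots> = (\<Sum>h=i..j. \<Sum>k<length Fs. (Fs ! k) i h * mat_pow n C k h j)"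
    using Fs assms(3,4) mat_pow_below_diagonal[OF C]
    by (intro sum.mono_neutral_right sum.neutral ballI) (auto simp: upper_triangular_def not_le)
  finally show ?thesis
    by (simp add: poly_mat_eval_entry_poly)
qed

lemma left_subst_eq_sum_entry_polys:
  assumes Fs: "\<forall>k<length Fs. upper_triangular (Fs ! k)" and C: "upper_triangular C"
    and "1 \<le> i" "j \<le> n"
  shows "left_subst n Fs C i j = (\<Sum>h=i..j. poly_mat_eval n (entry_poly Fs h j) C i h)"
proof -
  have "left_subst n Fs C i j = (\<Sum>h=1..n. \<Sum>k<length Fs. (Fs ! k) h j * mat_pow n C k i h)"
    by (simp add: left_subst_def mat_mult_def sum.swap[of _ "{..<length Fs}"] mult.commute)
  also have "\<dots> = (\<Sum>h=i..j. \<Sum>k<length Fs. (Fs ! k) h j * mat_pow n C k i h)"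
    using Fs assms(3,4) mat_pow_below_diagonal[OF C]
    by (intro sum.mono_neutral_right sum.neutral ballI) (auto simp: upper_triangular_def not_le)
  finally show ?thesis
    by (simp add: poly_mat_eval_entry_poly)
qed

lemma right_subst_rows_from:
  assumes Fs: "\<forall>k<length Fs. upper_triangular (Fs ! k)" and C: "upper_triangular C"
    and "1 \<le> i" "x \<in> {i..j}" "j \<le> n"
  shows "right_subst n Fs (rows_from x C) i j = (\<Sum>h=x..j. poly_mat_eval n (entry_poly Fs i h) C h j)"
proof -
  have "right_subst n Fs (rows_from x C) i j = (\<Sum>h=i..j. poly_mat_eval n (entry_poly Fs i h) (rows_from x C) h j)"
    using assms by (intro right_subst_eq_sum_entry_polys upper_triangular_rows_from) auto
  also have "\<dots> = (\<Sum>h=i..j. if x \<le> h then poly_mat_eval n (entry_poly Fs i h) C h j else 0)"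
    using assms by (intro sum.cong refl poly_mat_eval_rows_from) auto
  also have "\<dots> = (\<Sum>h=x..j. poly_mat_eval n (entry_poly Fs i h) C h j)"
    using assms(4) by (intro sum.mono_neutral_cong_right) auto
  finally show ?thesis .
qed

lemma left_subst_cols_upto:
  assumes Fs: "\<forall>k<length Fs. upper_triangular (Fs ! k)" and C: "upper_triangular C"
    and "1 \<le> i" "x \<in> {i..j}" "j \<le> n"
  shows "left_subst n Fs (cols_upto x C) i j = (\<Sum>h=i..x. poly_mat_eval n (entry_poly Fs h j) C i h)"
proof -
  have "left_subst n Fs (cols_upto x C) i j = (\<Sum>h=i..j. poly_mat_eval n (entry_poly Fs h j) (cols_upto x C) i h)"
    using assms by (intro left_subst_eq_sum_entry_polys upper_triangular_cols_upto) auto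
  also have "\<dots> = (\<Sum>h=i..j. if h \<le> x then poly_mat_eval n (entry_poly Fs h j) C i h else 0)"
    using assms by (intro sum.cong refl poly_mat_eval_cols_upto) auto
  also have "\<dots> = (\<Sum>h=i..x. poly_mat_eval n (entry_poly Fs h j) C i h)"
    using assms(4) by (intro sum.mono_neutral_cong_right) auto
  finally show ?thesis .
qed

lemma ideal_sum_mem: "is_ideal_of I S \<Longrightarrow> (\<And>x. x \<in> A \<Longrightarrow> f x \<in> I) \<Longrightarrow> sum f A \<in> I"
  by (induction A rule: infinite_finite_induct) (auto simp: is_ideal_of_def)

lemma ideal_diff_mem: "is_ideal_of I S \<Longrightarrow> a \<in> I \<Longrightarrow> b \<in> I \<Longrightarrow> a - b \<in> I"
  by (simp add: is_ideal_of_def)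

lemma ideal_mem_of_suffix_sums:
  fixes G :: "nat \<Rightarrow> 'a::comm_ring_1"
  assumes "is_ideal_of I S" "\<And>x. x \<in> {i..j} \<Longrightarrow> (\<Sum>h=x..j. G h) \<in> I" "h \<in> {i..j}"
  shows "G h \<in> I"
proof (cases "h = j")
  case True
  then show ?thesis using assms(2)[of j] assms(3) by simp
next
  case False
  then have "G h = (\<Sum>x=h..j. G x) - (\<Sum>x=Suc h..j. G x)"
    using assms(3) by (simp add: sum.atLeast_Suc_atMost)
  also have "\<dots> \<in> I"
    using assms False by (intro ideal_diff_mem) auto
  finally show ?thesis .
qed

lemma ideal_mem_of_prefix_sums:
  fixes G :: "nat \<Rightarrow> 'a::comm_ring_1"
  assumes "is_ideal_of I S" "\<And>x. x \<in> {i..j} \<Longrightarrow> (\<Sum>h=i..x. G h) \<in> I" "h \<in> {i..j}"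
  shows "G h \<in> I"
proof (cases "h = i")
  case True
  then show ?thesis using assms(2)[of i] assms(3) by simp
next
  case False
  then obtain p where p: "h = Suc p" "i \<le> p"
    using assms(3) by (cases h) auto
  then have "G h = (\<Sum>x=i..h. G x) - (\<Sum>x=i..p. G x)"
    by simp
  also have "\<dots> \<in> I"
    by (intro ideal_diff_mem[OF assms(1)] assms(2)) (use assms(3) p in auto)
  finally show ?thesis .
qed

lemma right_subst_in_ideal_iff:
  assumes "0 \<in> S" "is_ideal_of I S" and Fs: "\<forall>k<length Fs. upper_triangular (Fs ! k)"
    and "1 \<le> i" "j \<le> n"
  shows "(\<forall>C\<in>tri_mats n S. right_subst n Fs C i j \<in> I)
     \<longleftrightarrow> (\<forall>C\<in>tri_mats n S. \<forall>h\<in>{i..j}. poly_mat_eval n (entry_poly Fs i h) C h j \<in> I)"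
proof
  assume H: "\<forall>C\<in>tri_mats n S. right_subst n Fs C i j \<in> I"
  show "\<forall>C\<in>tri_mats n S. \<forall>h\<in>{i..j}. poly_mat_eval n (entry_poly Fs i h) C h j \<in> I"
  proof (intro ballI)
    fix C h assume C: "C \<in> tri_mats n S" and h: "h \<in> {i..j}"
    have "(\<Sum>h=x..j. poly_mat_eval n (entry_poly Fs i h) C h j) \<in> I" if "x \<in> {i..j}" for x
    proof -
      have "right_subst n Fs (rows_from x C) i j \<in> I"
        using H rows_from_tri_mats[OF C assms(1)] by blast
      then show ?thesis
        by (simp only: right_subst_rows_from[OF Fs tri_mats_upper_triangular[OF C] assms(4) that assms(5)])
    qed
    then show "poly_mat_eval n (entry_poly Fs i h) C h j \<in> I"
      by (rule ideal_mem_of_suffix_sums[OF assms(2) _ h])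
  qed
next
  assume "\<forall>C\<in>tri_mats n S. \<forall>h\<in>{i..j}. poly_mat_eval n (entry_poly Fs i h) C h j \<in> I"
  then show "\<forall>C\<in>tri_mats n S. right_subst n Fs C i j \<in> I"
    by (simp add: right_subst_eq_sum_entry_polys[OF Fs tri_mats_upper_triangular assms(4,5)])
      (auto intro!: ideal_sum_mem[OF assms(2)])
qed

lemma left_subst_in_ideal_iff:
  assumes "0 \<in> S" "is_ideal_of I S" and Fs: "\<forall>k<length Fs. upper_triangular (Fs ! k)"
    and "1 \<le> i" "j \<le> n"
  shows "(\<forall>C\<in>tri_mats n S. left_subst n Fs C i j \<in> I)
     \<longleftrightarrow> (\<forall>C\<in>tri_mats n S. \<forall>h\<in>{i..j}. poly_mat_eval n (entry_poly Fs h j) C i h \<in> I)"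
proof
  assume H: "\<forall>C\<in>tri_mats n S. left_subst n Fs C i j \<in> I"
  show "\<forall>C\<in>tri_mats n S. \<forall>h\<in>{i..j}. poly_mat_eval n (entry_poly Fs h j) C i h \<in> I"
  proof (intro ballI)
    fix C h assume C: "C \<in> tri_mats n S" and h: "h \<in> {i..j}"
    have "(\<Sum>h=i..x. poly_mat_eval n (entry_poly Fs h j) C i h) \<in> I" if "x \<in> {i..j}" for x
    proof -
      have "left_subst n Fs (cols_upto x C) i j \<in> I"
        using H cols_upto_tri_mats[OF C assms(1)] by blast
      then show ?thesis
        by (simp only: left_subst_cols_upto[OF Fs tri_mats_upper_triangular[OF C] assms(4) that assms(5)])
    qed
    then show "poly_mat_eval n (entry_poly Fs h j) C i h \<in> I"
      by (rule ideal_mem_of_prefix_sums[OF assms(2) _ h])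
  qed
next
  assume "\<forall>C\<in>tri_mats n S. \<forall>h\<in>{i..j}. poly_mat_eval n (entry_poly Fs h j) C i h \<in> I"
  then show "\<forall>C\<in>tri_mats n S. left_subst n Fs C i j \<in> I"
    by (simp add: left_subst_eq_sum_entry_polys[OF Fs tri_mats_upper_triangular assms(4,5)])
      (auto intro!: ideal_sum_mem[OF assms(2)])
qed

theorem lemma3p4:
  fixes S I :: "'a::comm_ring_1 set" and n i j :: nat and Fs :: "'a sqmat list"
  assumes "is_subring S" and "is_ideal_of I S" and "1 \<le> n"
    and "\<forall>k < length Fs. Fs ! k \<in> tri_mats n (UNIV :: 'a set)"
    and "1 \<le> i" and "i \<le> j" and "j \<le> n"
  shows "((\<forall>C\<in>tri_mats n S. right_subst n Fs C i j \<in> I)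
            \<longleftrightarrow> (\<forall>C\<in>tri_mats n S. \<forall>h\<in>{i..j}. poly_mat_eval n (entry_poly Fs i h) C h j \<in> I))
       \<and> ((\<forall>C\<in>tri_mats n S. \<forall>h\<in>{i..j}. poly_mat_eval n (entry_poly Fs i h) C h j \<in> I)
            \<longleftrightarrow> (\<forall>h\<in>{i..j}. pairing (entry_poly Fs i h) h j \<in> Int_SI S I))
       \<and> ((\<forall>C\<in>tri_mats n S. left_subst n Fs C i j \<in> I)
            \<longleftrightarrow> (\<forall>C\<in>tri_mats n S. \<forall>h\<in>{i..j}. poly_mat_eval n (entry_poly Fs h j) C i h \<in> I))
       \<and> ((\<forall>C\<in>tri_mats n S. \<forall>h\<in>{i..j}. poly_mat_eval n (entry_poly Fs h j) C i h \<in> I)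
            \<longleftrightarrow> (\<forall>h\<in>{i..j}. pairing (entry_poly Fs h j) i h \<in> Int_SI S I))"
proof -
  have S0: "0 \<in> S"
    using assms(1) by (simp add: is_subring_def)
  have Fs: "\<forall>k<length Fs. upper_triangular (Fs ! k)"
    using assms(4) tri_mats_upper_triangular by blast
  have "(\<forall>C\<in>tri_mats n S. poly_mat_eval n (entry_poly Fs i h) C h j \<in> I)
      \<longleftrightarrow> pairing (entry_poly Fs i h) h j \<in> Int_SI S I"
   and "(\<forall>C\<in>tri_mats n S. poly_mat_eval n (entry_poly Fs h j) C i h \<in> I)
      \<longleftrightarrow> pairing (entry_poly Fs h j) i h \<in> Int_SI S I" if "h \<in> {i..j}" for h
    using that assms(5,7) by (intro poly_mat_eval_in_iff_pairing_in_Int_SI[OF S0]; simp)+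
  then show ?thesis
    using right_subst_in_ideal_iff[OF S0 assms(2) Fs assms(5,7)]
      left_subst_in_ideal_iff[OF S0 assms(2) Fs assms(5,7)]
    by blast
qed

end
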